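(* For all $T>0$ and Borel $V$, $\|N(V,T)\|_\infty\le\|N(V)\|_{T,\infty}\le2\|N(V,T)\|_\infty$. Moreover there is a constant $C$ depending only on $d$ such that for all $T>0$ and Borel $V$, $\|S(V,T)\|_\infty\le\|S(V)\|_{T,\infty}\le C\|S(V,T)\|_\infty$.
   Context: $g(t,x,y)=(4\pi t)^{-d/2}e^{-|y-x|^2/(4t)}$. $S(V,t,x,y)=\int_0^t\int_{\mathbb{R}^d}\frac{g(s,x,z)g(t-s,z,y)}{g(t,x,y)}|V(z)|\,dz\,ds$, $\|S(V,t)\|_\infty=\sup_{x,y}S(V,t,x,y)$, $\|S(V)\|_{T,\infty}=\sup_{0<t\le T}\|S(V,t)\|_\infty$. $N(V,t,x,y)=\int_0^{t/2}\int_{\mathbb{R}^d}\tau^{-d/2}e^{-|z-y+(\tau/t)(y-x)|^2/(4\tau)}|V(z)|\,dz\,d\tau+\int_{t/2}^t\int_{\mathbb{R}^d}(t-\tau)^{-d/2}e^{-|z-y+(\tau/t)(y-x)|^2/(4(t-\tau))}|V(z)|\,dz\,d\tau$, $\|N(V,t)\|_\infty=\sup_{x,y}N(V,t,x,y)$, $\|N(V)\|_{T,\infty}=\sup_{0<t\le T}\|N(V,t)\|_\infty$. *)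

theory Defs
  imports "HOL-Analysis.Analysis"
begin

definition gker :: "real \<Rightarrow> 'a::euclidean_space \<Rightarrow> 'a \<Rightarrow> real" where
  "gker t x y = (4 * pi * t) powr (- real DIM('a) / 2) * exp (- (norm (y - x))\<^sup>2 / (4 * t))"

definition Sfun :: "('a::euclidean_space \<Rightarrow> real) \<Rightarrow> real \<Rightarrow> 'a \<Rightarrow> 'a \<Rightarrow> ennreal" where
  "Sfun V t x y = (\<integral>\<^sup>+ s. indicator {0<..<t} s *
      (\<integral>\<^sup>+ z. ennreal (gker s x z * gker (t - s) z y / gker t x y * \<bar>V z\<bar>) \<partial>lborel) \<partial>lborel)"

definition Snorm :: "('a::euclidean_space \<Rightarrow> real) \<Rightarrow> real \<Rightarrow> ennreal" where
  "Snorm V t = (SUP xy \<in> (UNIV :: ('a \<times> 'a) set). Sfun V t (fst xy) (snd xy))"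

definition SnormT :: "('a::euclidean_space \<Rightarrow> real) \<Rightarrow> real \<Rightarrow> ennreal" where
  "SnormT V T = (SUP t \<in> {0<..T}. Snorm V t)"

definition Nfun :: "('a::euclidean_space \<Rightarrow> real) \<Rightarrow> real \<Rightarrow> 'a \<Rightarrow> 'a \<Rightarrow> ennreal" where
  "Nfun V t x y =
     (\<integral>\<^sup>+ \<tau>. indicator {0<..<t/2} \<tau> *
        (\<integral>\<^sup>+ z. ennreal (\<tau> powr (- real DIM('a) / 2) *
            exp (- (norm (z - y + (\<tau> / t) *\<^sub>R (y - x)))\<^sup>2 / (4 * \<tau>)) * \<bar>V z\<bar>) \<partial>lborel) \<partial>lborel)
   + (\<integral>\<^sup>+ \<tau>. indicator {t/2..<t} \<tau> *
        (\<integral>\<^sup>+ z. ennreal ((t - \<tau>) powr (- real DIM('a) / 2) *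
            exp (- (norm (z - y + (\<tau> / t) *\<^sub>R (y - x)))\<^sup>2 / (4 * (t - \<tau>))) * \<bar>V z\<bar>) \<partial>lborel) \<partial>lborel)"

definition Nnorm :: "('a::euclidean_space \<Rightarrow> real) \<Rightarrow> real \<Rightarrow> ennreal" where
  "Nnorm V t = (SUP xy \<in> (UNIV :: ('a \<times> 'a) set). Nfun V t (fst xy) (snd xy))"

definition NnormT :: "('a::euclidean_space \<Rightarrow> real) \<Rightarrow> real \<Rightarrow> ennreal" where
  "NnormT V T = (SUP t \<in> {0<..T}. Nnorm V t)"

end

theory Submission
  imports Defs
begin

text \<open>
  Both quantities are suprema, over the endpoints \<open>x, y\<close>, of time integrals along the
  segment from \<open>x\<close> to \<open>y\<close> traversed in time \<open>t\<close>. For \<open>t \<le> T\<close>, stretching the segment by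
  the factor \<open>T / t\<close> from one endpoint turns half of the time-\<open>t\<close> integral into part of a
  time-\<open>T\<close> integral. For \<open>N\<close> this is exact, because the velocity of the segment is
  unchanged. For \<open>S\<close>, the kernel \<open>g(s,x,z) g(t-s,z,y) / g(t,x,y)\<close> is the heat kernel of
  variance \<open>s (t - s) / t\<close> centred at \<open>x + (s/t) (y - x)\<close>; the centre is unchanged by the
  stretching and for \<open>s \<le> t/2\<close> the variance grows by a factor at most 2, which costs
  \<open>2 ^ (d/2)\<close>. The other half is handled symmetrically (for \<open>S\<close> by reversing time,
  which exchanges \<open>x\<close> and \<open>y\<close>), giving the constants \<open>2\<close> and \<open>2 * 2 ^ (d/2)\<close>.
\<close>

lemma power2_norm_diff_scaleR:
  fixes a b :: "'a::real_inner"
  shows "(norm (a - c *\<^sub>R b))\<^sup>2 = (norm a)\<^sup>2 - 2 * c * inner a b + c\<^sup>2 * (norm b)\<^sup>2"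
  unfolding power2_norm_eq_inner
  by (simp add: inner_diff_left inner_diff_right inner_commute power2_eq_square algebra_simps)

lemma SUP_Ioc_bounds:
  fixes f :: "real \<Rightarrow> 'b::complete_lattice"
  assumes "0 < T" and "\<And>t. 0 < t \<Longrightarrow> t \<le> T \<Longrightarrow> f t \<le> b"
  shows "f T \<le> (SUP t\<in>{0<..T}. f t)" and "(SUP t\<in>{0<..T}. f t) \<le> b"
  using assms by (auto intro: SUP_upper SUP_least)

definition Nfun_first_half :: "('a::euclidean_space \<Rightarrow> real) \<Rightarrow> real \<Rightarrow> 'a \<Rightarrow> 'a \<Rightarrow> ennreal" where
  "Nfun_first_half V t x y =
     (\<integral>\<^sup>+ \<tau>. indicator {0<..<t/2} \<tau> *
        (\<integral>\<^sup>+ z. ennreal (\<tau> powr (- real DIM('a) / 2) *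
            exp (- (norm (z - y + (\<tau> / t) *\<^sub>R (y - x)))\<^sup>2 / (4 * \<tau>)) * \<bar>V z\<bar>) \<partial>lborel) \<partial>lborel)"

definition Nfun_second_half :: "('a::euclidean_space \<Rightarrow> real) \<Rightarrow> real \<Rightarrow> 'a \<Rightarrow> 'a \<Rightarrow> ennreal" where
  "Nfun_second_half V t x y =
     (\<integral>\<^sup>+ \<tau>. indicator {t/2..<t} \<tau> *
        (\<integral>\<^sup>+ z. ennreal ((t - \<tau>) powr (- real DIM('a) / 2) *
            exp (- (norm (z - y + (\<tau> / t) *\<^sub>R (y - x)))\<^sup>2 / (4 * (t - \<tau>))) * \<bar>V z\<bar>) \<partial>lborel) \<partial>lborel)"

lemma Nfun_eq_halves: "Nfun V t x y = Nfun_first_half V t x y + Nfun_second_half V t x y"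
  unfolding Nfun_def Nfun_first_half_def Nfun_second_half_def ..

lemma Nfun_le_Nnorm: "Nfun V t x y \<le> Nnorm V t"
  unfolding Nnorm_def by (rule SUP_upper2[of "(x, y)"]) auto

lemma Nfun_first_half_le_rescaled:
  fixes V :: "'a::euclidean_space \<Rightarrow> real"
  assumes "0 < t" "t \<le> T"
  shows "Nfun_first_half V t x y \<le> Nfun_first_half V T (y + (T / t) *\<^sub>R (x - y)) y"
proof -
  have velocity: "(\<tau> / T) *\<^sub>R (y - (y + (T / t) *\<^sub>R (x - y))) = (\<tau> / t) *\<^sub>R (y - x)" for \<tau>
  proof -
    have "(\<tau> / T) *\<^sub>R (y - (y + (T / t) *\<^sub>R (x - y))) = ((\<tau> / T) * (T / t)) *\<^sub>R (y - x)"
      by (simp add: algebra_simps)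
    then show ?thesis using assms by simp
  qed
  show ?thesis
    unfolding Nfun_first_half_def velocity
    using assms by (intro nn_integral_mono mult_right_mono) (auto simp: indicator_def)
qed

lemma Nfun_second_half_le_rescaled:
  fixes V :: "'a::euclidean_space \<Rightarrow> real"
  assumes "0 < t" "t \<le> T" and [measurable]: "V \<in> borel_measurable borel"
  shows "Nfun_second_half V t x y \<le> Nfun_second_half V T x (x + (T / t) *\<^sub>R (y - x))"
proof -
  define y' where "y' = x + (T / t) *\<^sub>R (y - x)"
  define G where "G = (\<lambda>\<tau>. indicator {T/2..<T} \<tau> *
        (\<integral>\<^sup>+ z. ennreal ((T - \<tau>) powr (- real DIM('a) / 2) *
            exp (- (norm (z - y' + (\<tau> / T) *\<^sub>R (y' - x)))\<^sup>2 / (4 * (T - \<tau>))) * \<bar>V z\<bar>) \<partial>lborel))"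
  have [measurable]: "G \<in> borel_measurable borel" unfolding G_def by measurable
  have velocity: "z - y' + ((T - t + \<tau>) / T) *\<^sub>R (y' - x) = z - y + (\<tau> / t) *\<^sub>R (y - x)" for z \<tau>
  proof -
    have factor: "((T - t + \<tau>) / T) * (T / t) = T / t - 1 + \<tau> / t"
      using assms by (simp add: field_simps)
    have "z - y' + ((T - t + \<tau>) / T) *\<^sub>R (y' - x)
        = z - x - (T / t) *\<^sub>R (y - x) + (((T - t + \<tau>) / T) * (T / t)) *\<^sub>R (y - x)"
      unfolding y'_def by (simp add: algebra_simps)
    then show ?thesis unfolding factor by (simp add: algebra_simps)
  qed
  have "Nfun_second_half V t x y \<le> (\<integral>\<^sup>+ \<tau>. G (T - t + 1 * \<tau>) \<partial>lborel)"
    unfolding Nfun_second_half_def G_def mult_1 velocity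
    using assms by (intro nn_integral_mono mult_right_mono) (auto simp: indicator_def)
  also have "\<dots> = Nfun_second_half V T x y'"
    using nn_integral_real_affine[of G 1 "T - t"] unfolding Nfun_second_half_def G_def by simp
  finally show ?thesis unfolding y'_def .
qed

lemma Nnorm_le_rescaled:
  fixes V :: "'a::euclidean_space \<Rightarrow> real"
  assumes "0 < t" "t \<le> T" and "V \<in> borel_measurable borel"
  shows "Nnorm V t \<le> 2 * Nnorm V T"
  unfolding Nnorm_def[of V t]
proof (rule SUP_least, clarify)
  fix x y :: 'a
  have "Nfun_first_half V t x y \<le> Nnorm V T"
  proof -
    have "Nfun_first_half V t x y \<le> Nfun_first_half V T (y + (T / t) *\<^sub>R (x - y)) y"
      using assms(1,2) by (rule Nfun_first_half_le_rescaled)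
    also have "\<dots> \<le> Nfun V T (y + (T / t) *\<^sub>R (x - y)) y"
      unfolding Nfun_eq_halves by (simp add: add_increasing2)
    also have "\<dots> \<le> Nnorm V T" by (rule Nfun_le_Nnorm)
    finally show ?thesis .
  qed
  moreover have "Nfun_second_half V t x y \<le> Nnorm V T"
  proof -
    have "Nfun_second_half V t x y \<le> Nfun_second_half V T x (x + (T / t) *\<^sub>R (y - x))"
      using assms by (rule Nfun_second_half_le_rescaled)
    also have "\<dots> \<le> Nfun V T x (x + (T / t) *\<^sub>R (y - x))"
      unfolding Nfun_eq_halves by (simp add: add_increasing)
    also have "\<dots> \<le> Nnorm V T" by (rule Nfun_le_Nnorm)
    finally show ?thesis .
  qed
  ultimately show "Nfun V t x y \<le> 2 * Nnorm V T"
    unfolding Nfun_eq_halves mult_2 by (rule add_mono)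
qed

lemma gker_commute: "gker t x y = gker t y x"
  unfolding gker_def by (simp add: norm_minus_commute)

lemma gker_bridge:
  fixes x y z :: "'a::euclidean_space"
  assumes "0 < s" "s < t"
  shows "gker s x z * gker (t - s) z y / gker t x y
       = gker (s * (t - s) / t) (x + (s / t) *\<^sub>R (y - x)) z"
proof -
  define e where "e = - real DIM('a) / 2"
  define A where "A = (norm (z - x))\<^sup>2"
  define B where "B = (norm (y - x))\<^sup>2"
  define D where "D = inner (z - x) (y - x)"
  have norm_yz: "(norm (y - z))\<^sup>2 = B - 2 * D + A"
    using power2_norm_diff_scaleR[of "y - x" 1 "z - x"]
    unfolding A_def B_def D_def by (simp add: inner_commute)
  have norm_z_mid: "(norm (z - (x + (s / t) *\<^sub>R (y - x))))\<^sup>2 = A - 2 * (s / t) * D + (s / t)\<^sup>2 * B"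
    using power2_norm_diff_scaleR[of "z - x" "s / t" "y - x"]
    unfolding A_def B_def D_def by (simp add: algebra_simps)
  have exponent: "- A / (4 * s) + - (B - 2 * D + A) / (4 * (t - s)) - - B / (4 * t)
      = - (A - 2 * (s / t) * D + (s / t)\<^sup>2 * B) / (4 * (s * (t - s) / t))"
    using assms by (simp add: divide_simps power2_eq_square) (simp add: algebra_simps)
  have prefactor: "(4 * pi * s) powr e * (4 * pi * (t - s)) powr e / (4 * pi * t) powr e
      = (4 * pi * (s * (t - s) / t)) powr e"
  proof -
    have "(4 * pi * s) * (4 * pi * (t - s)) / (4 * pi * t) = 4 * pi * (s * (t - s) / t)"
      using assms by (simp add: field_simps)
    then show ?thesis
      using assms by (simp add: powr_mult powr_divide)
  qed
  have "gker s x z * gker (t - s) z y / gker t x y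
      = ((4 * pi * s) powr e * (4 * pi * (t - s)) powr e / (4 * pi * t) powr e)
        * exp (- A / (4 * s) + - (norm (y - z))\<^sup>2 / (4 * (t - s)) - - B / (4 * t))"
    unfolding gker_def e_def[symmetric] A_def B_def exp_add exp_diff by simp
  then show ?thesis
    unfolding prefactor norm_yz exponent gker_def e_def[symmetric] norm_z_mid .
qed

lemma gker_le_gker_wider:
  fixes m z :: "'a::euclidean_space"
  assumes "0 < a" "a \<le> b" "b \<le> k * a"
  shows "gker a m z \<le> k powr (real DIM('a) / 2) * gker b m z"
proof -
  define e where "e = real DIM('a) / 2"
  have "0 < b" "e \<ge> 0" using assms by (auto simp: e_def)
  have "(4 * pi * a) powr (- e) = (4 * pi * b) powr (- e) * (b / a) powr e"
    using \<open>0 < a\<close> \<open>0 < b\<close> by (simp add: powr_minus_divide powr_divide powr_mult field_simps)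
  also have "\<dots> \<le> (4 * pi * b) powr (- e) * k powr e"
    using assms \<open>e \<ge> 0\<close> by (intro mult_left_mono powr_mono2) (auto simp: field_simps)
  finally have prefactor: "(4 * pi * a) powr (- e) \<le> k powr e * (4 * pi * b) powr (- e)"
    by (simp add: mult.commute)
  have exponential: "exp (- (norm (z - m))\<^sup>2 / (4 * a)) \<le> exp (- (norm (z - m))\<^sup>2 / (4 * b))"
    using assms \<open>0 < b\<close> by (simp add: frac_le)
  show ?thesis
    using mult_mono[OF prefactor exponential]
    unfolding gker_def e_def by (simp add: mult.assoc)
qed

lemma bridge_variance_bounds:
  fixes u t T :: real
  assumes "0 < u" "u \<le> t / 2" "t \<le> T"
  shows "u * (t - u) / t \<le> u * (T - u) / T" and "u * (T - u) / T \<le> 2 * (u * (t - u) / t)"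
proof -
  have "0 < t" using assms by simp
  have "u * (t - u) / t = u - u\<^sup>2 / t" "u * (T - u) / T = u - u\<^sup>2 / T"
    using assms by (simp_all add: field_simps power2_eq_square)
  moreover have "u\<^sup>2 / T \<le> u\<^sup>2 / t" using assms by (intro divide_left_mono) auto
  ultimately show "u * (t - u) / t \<le> u * (T - u) / T" by simp
  have "u * (T - u) / T \<le> u" using assms by (simp add: field_simps)
  also have "u \<le> 2 * (u * (t - u) / t)" using assms \<open>0 < t\<close> by (simp add: field_simps)
  finally show "u * (T - u) / T \<le> 2 * (u * (t - u) / t)" .
qed

definition bridge_potential :: "('a::euclidean_space \<Rightarrow> real) \<Rightarrow> real \<Rightarrow> 'a \<Rightarrow> 'a \<Rightarrow> real \<Rightarrow> ennreal" where
  "bridge_potential V t x y s =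
     (\<integral>\<^sup>+ z. ennreal (gker s x z * gker (t - s) z y / gker t x y * \<bar>V z\<bar>) \<partial>lborel)"

lemma Sfun_eq_integral_bridge_potential:
  "Sfun V t x y = (\<integral>\<^sup>+ s. indicator {0<..<t} s * bridge_potential V t x y s \<partial>lborel)"
  unfolding Sfun_def bridge_potential_def ..

lemma borel_measurable_bridge_potential [measurable]:
  fixes V :: "'a::euclidean_space \<Rightarrow> real"
  assumes [measurable]: "V \<in> borel_measurable borel"
  shows "bridge_potential V t x y \<in> borel_measurable borel"
  unfolding bridge_potential_def gker_def by measurable

lemma bridge_potential_commute: "bridge_potential V t x y s = bridge_potential V t y x (t - s)"
  unfolding bridge_potential_def
  by (simp add: gker_commute[of t x y] gker_commute[of s x] gker_commute[of "t - s" _ y] mult.commute)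

lemma bridge_potential_le_rescaled:
  fixes V :: "'a::euclidean_space \<Rightarrow> real"
  assumes "0 < u" "u \<le> t / 2" "t \<le> T" and [measurable]: "V \<in> borel_measurable borel"
  shows "bridge_potential V t x y u
      \<le> ennreal (2 powr (real DIM('a) / 2)) * bridge_potential V T x (x + (T / t) *\<^sub>R (y - x)) u"
proof -
  define c where "c = 2 powr (real DIM('a) / 2)"
  define y' where "y' = x + (T / t) *\<^sub>R (y - x)"
  have "0 < t" "u < t" "u < T" "0 < T" using assms by auto
  have same_centre: "x + (u / T) *\<^sub>R (y' - x) = x + (u / t) *\<^sub>R (y - x)"
    using \<open>0 < t\<close> \<open>0 < T\<close> by (simp add: y'_def)
  have kernel: "gker u x z * gker (t - u) z y / gker t x y
      \<le> c * (gker u x z * gker (T - u) z y' / gker T x y')" for z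
    unfolding gker_bridge[OF \<open>0 < u\<close> \<open>u < t\<close>] gker_bridge[OF \<open>0 < u\<close> \<open>u < T\<close>] same_centre c_def
    using bridge_variance_bounds[OF assms(1-3)] assms
    by (intro gker_le_gker_wider) (auto simp: mult.commute)
  have "bridge_potential V t x y u
      \<le> (\<integral>\<^sup>+ z. ennreal c * ennreal (gker u x z * gker (T - u) z y' / gker T x y' * \<bar>V z\<bar>) \<partial>lborel)"
    unfolding bridge_potential_def
  proof (rule nn_integral_mono)
    fix z
    have "gker u x z * gker (t - u) z y / gker t x y * \<bar>V z\<bar>
        \<le> c * (gker u x z * gker (T - u) z y' / gker T x y' * \<bar>V z\<bar>)"
      using mult_right_mono[OF kernel[of z], of "\<bar>V z\<bar>"] by (simp add: ac_simps)
    then show "ennreal (gker u x z * gker (t - u) z y / gker t x y * \<bar>V z\<bar>)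
        \<le> ennreal c * ennreal (gker u x z * gker (T - u) z y' / gker T x y' * \<bar>V z\<bar>)"
      by (metis c_def ennreal_leI ennreal_mult' powr_ge_zero)
  qed
  also have "\<dots> = ennreal c * bridge_potential V T x y' u"
    unfolding bridge_potential_def by (rule nn_integral_cmult) (unfold gker_def, measurable)
  finally show ?thesis unfolding c_def y'_def .
qed

lemma Sfun_le_Snorm: "Sfun V t x y \<le> Snorm V t"
  unfolding Snorm_def by (rule SUP_upper2[of "(x, y)"]) auto

lemma integral_first_half_bridge_potential_le:
  fixes V :: "'a::euclidean_space \<Rightarrow> real"
  assumes "0 < t" "t \<le> T" and [measurable]: "V \<in> borel_measurable borel"
  shows "(\<integral>\<^sup>+ s. indicator {0<..t/2} s * bridge_potential V t x y s \<partial>lborel)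
      \<le> ennreal (2 powr (real DIM('a) / 2)) * Sfun V T x (x + (T / t) *\<^sub>R (y - x))"
proof -
  define c where "c = 2 powr (real DIM('a) / 2)"
  define y' where "y' = x + (T / t) *\<^sub>R (y - x)"
  have "(\<integral>\<^sup>+ s. indicator {0<..t/2} s * bridge_potential V t x y s \<partial>lborel)
      \<le> (\<integral>\<^sup>+ s. ennreal c * (indicator {0<..<T} s * bridge_potential V T x y' s) \<partial>lborel)"
  proof (rule nn_integral_mono)
    fix s
    show "indicator {0<..t/2} s * bridge_potential V t x y s
        \<le> ennreal c * (indicator {0<..<T} s * bridge_potential V T x y' s)"
    proof (cases "s \<in> {0<..t/2}")
      case True
      then have "s \<in> {0<..<T}" using assms by auto
      with True bridge_potential_le_rescaled[of s t T V x y] assms show ?thesis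
        by (simp add: c_def y'_def)
    qed simp
  qed
  also have "\<dots> = ennreal c * Sfun V T x y'"
    unfolding Sfun_eq_integral_bridge_potential by (rule nn_integral_cmult) simp
  finally show ?thesis unfolding c_def y'_def .
qed

lemma Snorm_le_rescaled:
  fixes V :: "'a::euclidean_space \<Rightarrow> real"
  assumes "0 < t" "t \<le> T" and [measurable]: "V \<in> borel_measurable borel"
  shows "Snorm V t \<le> ennreal (2 * 2 powr (real DIM('a) / 2)) * Snorm V T"
  unfolding Snorm_def[of V t]
proof (rule SUP_least, clarify)
  fix x y :: 'a
  define c where "c = 2 powr (real DIM('a) / 2)"
  define F where "F = bridge_potential V t x y"
  have split: "indicator {0<..<t} s * F s
      = indicator {0<..t/2} s * F s + indicator {t/2<..<t} s * F s" for s
    using assms by (auto simp: indicator_def)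
  have "(\<integral>\<^sup>+ s. indicator {t/2<..<t} s * F s \<partial>lborel)
      = (\<integral>\<^sup>+ s. indicator {t/2<..<t} (t - s) * F (t - s) \<partial>lborel)"
    using nn_integral_real_affine[of "\<lambda>s. indicator {t/2<..<t} s * F s" "-1" t]
    by (simp add: F_def)
  also have "\<dots> \<le> (\<integral>\<^sup>+ s. indicator {0<..t/2} s * bridge_potential V t y x s \<partial>lborel)"
    by (intro nn_integral_mono) (auto simp: F_def indicator_def bridge_potential_commute[of V t x y])
  also have "\<dots> \<le> ennreal c * Snorm V T"
    unfolding c_def
    by (rule order_trans[OF integral_first_half_bridge_potential_le[OF assms]
          mult_left_mono[OF Sfun_le_Snorm]]) simp
  finally have second_half: "(\<integral>\<^sup>+ s. indicator {t/2<..<t} s * F s \<partial>lborel) \<le> ennreal c * Snorm V T" .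
  have first_half: "(\<integral>\<^sup>+ s. indicator {0<..t/2} s * F s \<partial>lborel) \<le> ennreal c * Snorm V T"
    unfolding c_def F_def
    by (rule order_trans[OF integral_first_half_bridge_potential_le[OF assms]
          mult_left_mono[OF Sfun_le_Snorm]]) simp
  have "Sfun V t x y = (\<integral>\<^sup>+ s. indicator {0<..t/2} s * F s \<partial>lborel)
      + (\<integral>\<^sup>+ s. indicator {t/2<..<t} s * F s \<partial>lborel)"
    unfolding Sfun_eq_integral_bridge_potential F_def[symmetric] split
    by (rule nn_integral_add) (auto simp: F_def)
  also have "\<dots> \<le> 2 * (ennreal c * Snorm V T)"
    using add_mono[OF first_half second_half] by (simp add: mult_2)
  finally show "Sfun V t x y \<le> ennreal (2 * c) * Snorm V T"
    by (simp add: ennreal_mult c_def mult.assoc)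
qed

theorem corollary2p4:
  "(\<forall>(V :: 'a::euclidean_space \<Rightarrow> real) T. T > 0 \<longrightarrow> V \<in> borel_measurable borel \<longrightarrow>
      Nnorm V T \<le> NnormT V T \<and> NnormT V T \<le> 2 * Nnorm V T)
   \<and> (\<exists>C :: real. \<forall>(V :: 'a \<Rightarrow> real) T. T > 0 \<longrightarrow> V \<in> borel_measurable borel \<longrightarrow>
      Snorm V T \<le> SnormT V T \<and> SnormT V T \<le> ennreal C * Snorm V T)"
proof (intro conjI allI impI exI[of _ "2 * 2 powr (real DIM('a) / 2)"])
  fix V :: "'a \<Rightarrow> real" and T :: real
  assume "T > 0" "V \<in> borel_measurable borel"
  then show "Nnorm V T \<le> NnormT V T" "NnormT V T \<le> 2 * Nnorm V T"
    unfolding NnormT_def using Nnorm_le_rescaled by (auto intro: SUP_Ioc_bounds)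
next
  fix V :: "'a \<Rightarrow> real" and T :: real
  assume "T > 0" "V \<in> borel_measurable borel"
  then show "Snorm V T \<le> SnormT V T"
    "SnormT V T \<le> ennreal (2 * 2 powr (real DIM('a) / 2)) * Snorm V T"
    unfolding SnormT_def using Snorm_le_rescaled by (auto intro: SUP_Ioc_bounds)
qed

end
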